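(* Let $G=(V,E)$ be an undirected graph without self-loops, let $\succ$ be a strict total order on $V$, and let $u\ne v$ be vertices with $u$ dominating $v$ and $u\succ v$. Let $\mathcal D$ be a set of constraints of the form $x+\bar y\ge1$ with $x\ne y$, $x$ dominating $y$, $x\succ y$, and ($x=u$ or $x\succ u$), such that $\mathcal D$ contains $x+\bar y\ge1$ for every pair of distinct vertices $(x,y)$ with $x$ dominating $y$, $x\succ y$ and $x\succ u$. Let $\omega$ be the substitution swapping $u$ and $v$ ($u\mapsto v$, $v\mapsto u$, identity elsewhere). Then for every $k\in\mathbb Z\cup\{\infty\}$, $$F_G\cup\mathcal D\cup\{f\le k-1\}\cup\{\neg(u+\bar v\ge1)\}\ \vdash\ (F_G\cup\mathcal D\cup\{u+\bar v\ge1\})|_\omega\cup\{f|_\omega\le f\},$$ i.e. the redundance-based strengthening condition (with the trivial preorder) holds for deriving $u+\bar v\ge1$ from core set $F_G$ and derived set $\mathcal D$.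
   Context: Each vertex $w\in V$ is identified with a Boolean variable ($w=1$ meaning $w$ is in the clique). $F_G$ is the PB formula consisting of $\bar a+\bar b\ge1$ for all distinct non-adjacent $a,b\in V$; the objective is $f=\sum_{w\in V}\bar w$ (to be minimized). $N(w)=\{w':(w,w')\in E\}$; for distinct $a,b$, $a$ dominates $b$ if $N(a)\setminus\{b\}\supseteq N(b)\setminus\{a\}$. A literal is a variable or its negation $\bar x=1-x$; a PB constraint is $\sum_i a_i\ell_i\ge A$ with negation $\sum_i -a_i\ell_i\ge -A+1$. For a substitution $\omega$, $C|_\omega$ replaces each literal by its image ($\omega(\bar x)=\overline{\omega(x)}$), $G|_\omega$ and $f|_\omega$ likewise. $\vdash$ denotes cutting planes derivability (axioms, literal axioms $\ell\ge0$, positive integer linear combinations, division with rounding up), extended so that $H\vdash D$ whenever $0\ge1$ is derivable from $H\cup\{\neg D\}$; $H\vdash S$ for a set means for each member. $f\le\infty-1$ is the trivially true constraint. *)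

theory Defs
  imports Complex_Main
begin

text \<open>Variables are the elements of a finite type 'v (the vertex set V is UNIV).
A literal is a variable x or its negation (1 - x).\<close>

datatype 'v lit = Pos 'v | Neg 'v

text \<open>A PB constraint is stored in canonical linear form (c, d), meaning
  sum over x of (c x * x) >= d, where every negated literal has been rewritten
  as 1 - x.  Every constraint sum_i a_i l_i >= A has exactly one such form.\<close>

type_synonym 'v pbc = "('v \<Rightarrow> int) \<times> int"

text \<open>A linear expression (c, e) denotes sum over x of (c x * x) + e.\<close>

type_synonym 'v linexp = "('v \<Rightarrow> int) \<times> int"

fun lit_coef :: "'v lit \<Rightarrow> 'v \<Rightarrow> int" where
  "lit_coef (Pos x) y = (if x = y then 1 else 0)"
| "lit_coef (Neg x) y = (if x = y then -1 else 0)"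

fun lit_const :: "'v lit \<Rightarrow> int" where
  "lit_const (Pos x) = 0"
| "lit_const (Neg x) = 1"

definition lin_of_terms :: "(int \<times> 'v lit) list \<Rightarrow> 'v linexp" where
  "lin_of_terms ts =
     ((\<lambda>y. \<Sum>(a, l)\<leftarrow>ts. a * lit_coef l y), (\<Sum>(a, l)\<leftarrow>ts. a * lit_const l))"

definition pbc :: "(int \<times> 'v lit) list \<Rightarrow> int \<Rightarrow> 'v pbc" where
  "pbc ts A = (fst (lin_of_terms ts), A - snd (lin_of_terms ts))"

definition neg_pbc :: "'v pbc \<Rightarrow> 'v pbc" where
  "neg_pbc C = ((\<lambda>x. - fst C x), - snd C + 1)"

definition lin_le :: "'v linexp \<Rightarrow> 'v linexp \<Rightarrow> 'v pbc" where
  "lin_le L1 L2 = ((\<lambda>x. fst L2 x - fst L1 x), snd L1 - snd L2)"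

text \<open>The constraint f <= k - 1 for k in Z \<union> {\<infinity>}; None stands for \<infinity>,
  in which case the constraint is the trivially true constraint 0 >= 0.\<close>

definition obj_le :: "'v linexp \<Rightarrow> int option \<Rightarrow> 'v pbc" where
  "obj_le f k = (case k of
      None \<Rightarrow> ((\<lambda>_. 0), 0)
    | Some k' \<Rightarrow> lin_le f ((\<lambda>_. 0), k' - 1))"

text \<open>A substitution maps every variable to a literal; C|_\<omega> replaces each
  variable x by \<omega> x (and thus each negated literal by the negation of \<omega> x).\<close>

definition subst_lin :: "('v::finite \<Rightarrow> 'v lit) \<Rightarrow> 'v linexp \<Rightarrow> 'v linexp" where
  "subst_lin \<omega> L =
     ((\<lambda>y. \<Sum>x\<in>UNIV. fst L x * lit_coef (\<omega> x) y),
      snd L + (\<Sum>x\<in>UNIV. fst L x * lit_const (\<omega> x)))"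

definition subst_pbc :: "('v::finite \<Rightarrow> 'v lit) \<Rightarrow> 'v pbc \<Rightarrow> 'v pbc" where
  "subst_pbc \<omega> C =
     ((\<lambda>y. \<Sum>x\<in>UNIV. fst C x * lit_coef (\<omega> x) y),
      snd C - (\<Sum>x\<in>UNIV. fst C x * lit_const (\<omega> x)))"

definition swap_subst :: "'v \<Rightarrow> 'v \<Rightarrow> 'v \<Rightarrow> 'v lit" where
  "swap_subst u v x = Pos (if x = u then v else if x = v then u else x)"

definition add_pbc :: "'v pbc \<Rightarrow> 'v pbc \<Rightarrow> 'v pbc" where
  "add_pbc C D = ((\<lambda>x. fst C x + fst D x), snd C + snd D)"

definition mult_pbc :: "int \<Rightarrow> 'v pbc \<Rightarrow> 'v pbc" where
  "mult_pbc m C = ((\<lambda>x. m * fst C x), m * snd C)"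

definition ceil_div :: "int \<Rightarrow> int \<Rightarrow> int" where
  "ceil_div a m = \<lceil>real_of_int a / real_of_int m\<rceil>"

text \<open>Division with rounding up, performed on the normalized form
  sum_x |c x| * l_x >= d + (sum of |c x| over negative c x),
  where l_x = x if c x >= 0 and l_x = 1 - x otherwise; the result is translated
  back to linear form.\<close>

definition div_pbc :: "'v::finite pbc \<Rightarrow> int \<Rightarrow> 'v pbc" where
  "div_pbc C m =
    (let c = fst C;
         N = (\<Sum>x\<in>UNIV. if c x < 0 then - c x else 0)
     in ((\<lambda>x. sgn (c x) * ceil_div \<bar>c x\<bar> m),
         ceil_div (snd C + N) m
           - (\<Sum>x\<in>UNIV. if c x < 0 then ceil_div (- c x) m else 0)))"

inductive cp_derivable :: "'v::finite pbc set \<Rightarrow> 'v pbc \<Rightarrow> bool" where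
  axiom: "C \<in> H \<Longrightarrow> cp_derivable H C"
| lit_axiom_pos: "cp_derivable H (pbc [(1, Pos x)] 0)"
| lit_axiom_neg: "cp_derivable H (pbc [(1, Neg x)] 0)"
| add: "cp_derivable H C \<Longrightarrow> cp_derivable H D \<Longrightarrow> cp_derivable H (add_pbc C D)"
| mult: "m > 0 \<Longrightarrow> cp_derivable H C \<Longrightarrow> cp_derivable H (mult_pbc m C)"
| divide: "m > 0 \<Longrightarrow> cp_derivable H C \<Longrightarrow> cp_derivable H (div_pbc C m)"

definition contradiction :: "'v pbc" where
  "contradiction = ((\<lambda>_. 0), 1)"

definition derives :: "'v::finite pbc set \<Rightarrow> 'v pbc \<Rightarrow> bool" where
  "derives H D \<longleftrightarrow> cp_derivable H D \<or> cp_derivable (insert (neg_pbc D) H) contradiction"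

definition derives_set :: "'v::finite pbc set \<Rightarrow> 'v pbc set \<Rightarrow> bool" where
  "derives_set H S \<longleftrightarrow> (\<forall>D\<in>S. derives H D)"

text \<open>An undirected graph on vertex set UNIV is a symmetric irreflexive E.\<close>

definition nbhd :: "('v \<times> 'v) set \<Rightarrow> 'v \<Rightarrow> 'v set" where
  "nbhd E w = {w'. (w, w') \<in> E}"

definition dominates :: "('v \<times> 'v) set \<Rightarrow> 'v \<Rightarrow> 'v \<Rightarrow> bool" where
  "dominates E a b \<longleftrightarrow> a \<noteq> b \<and> nbhd E b - {a} \<subseteq> nbhd E a - {b}"

definition clique_formula :: "('v \<times> 'v) set \<Rightarrow> 'v pbc set" where
  "clique_formula E = {pbc [(1, Neg a), (1, Neg b)] 1 | a b. a \<noteq> b \<and> (a, b) \<notin> E}"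

definition clique_obj :: "'v set \<Rightarrow> 'v linexp" where
  "clique_obj V = ((\<lambda>y. \<Sum>w\<in>V. lit_coef (Neg w) y), (\<Sum>w\<in>V. lit_const (Neg w)))"

definition dom_clause :: "'v \<Rightarrow> 'v \<Rightarrow> 'v pbc" where
  "dom_clause x y = pbc [(1, Pos x), (1, Neg y)] 1"

end

theory Submission
  imports Defs "HOL-Combinatorics.Transposition"
begin

text \<open>
  The negated clause u + \<not>v \<ge> 1 is v - u \<ge> 1; adding literal axioms gives the units
  \<not>u \<ge> 1 and v \<ge> 1, so every clause containing \<not>u or v is derivable.  Swapping u and v is a
  renaming of variables, so it fixes the objective and maps clauses to clauses.  A non-edge clause
  \<not>a + \<not>b \<ge> 1 goes either to a clause containing \<not>u or, since N(v) - {u} \<subseteq> N(u) - {v}, to a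
  non-edge clause.  A dominance clause x + \<not>y \<ge> 1 of \<D> goes to a clause containing v or \<not>u, to
  itself, or (when y = u) to x + \<not>v \<ge> 1, which lies in \<D> because domination and the order are
  transitive through u.
\<close>

lemma swap_subst_eq_transpose: "swap_subst u v = Pos \<circ> transpose u v"
  by (simp add: fun_eq_iff swap_subst_def transpose_def)

lemma lit_coef_map_lit: "bij \<sigma> \<Longrightarrow> lit_coef (map_lit \<sigma> l) y = lit_coef l (inv \<sigma> y)"
  by (cases l) (auto simp: bij_inv_eq_iff)

lemma lit_const_map_lit: "lit_const (map_lit \<sigma> l) = lit_const l"
  by (cases l) simp_all

lemma sum_coef_rename:
  fixes c :: "'v::finite \<Rightarrow> int"
  assumes "bij \<sigma>"
  shows "(\<Sum>x\<in>UNIV. c x * (if \<sigma> x = y then 1 else 0)) = c (inv \<sigma> y)"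
proof -
  have "(\<Sum>x\<in>UNIV. c x * (if \<sigma> x = y then 1 else 0)) = (\<Sum>x\<in>UNIV. if x = inv \<sigma> y then c x else 0)"
    by (rule sum.cong) (auto simp: bij_inv_eq_iff[OF assms])
  then show ?thesis by simp
qed

lemma subst_pbc_rename: "bij \<sigma> \<Longrightarrow> subst_pbc (Pos \<circ> \<sigma>) C = (fst C \<circ> inv \<sigma>, snd C)"
  by (simp add: subst_pbc_def sum_coef_rename comp_def)

lemma subst_lin_rename: "bij \<sigma> \<Longrightarrow> subst_lin (Pos \<circ> \<sigma>) L = (fst L \<circ> inv \<sigma>, snd L)"
  by (simp add: subst_lin_def sum_coef_rename comp_def)

lemma lin_of_terms_rename:
  "bij \<sigma> \<Longrightarrow> lin_of_terms (map (apsnd (map_lit \<sigma>)) ts) = (fst (lin_of_terms ts) \<circ> inv \<sigma>, snd (lin_of_terms ts))"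
  by (simp add: lin_of_terms_def comp_def case_prod_unfold lit_coef_map_lit lit_const_map_lit)

lemma subst_pbc_rename_pbc:
  "bij \<sigma> \<Longrightarrow> subst_pbc (Pos \<circ> \<sigma>) (pbc ts A) = pbc (map (apsnd (map_lit \<sigma>)) ts) A"
  by (simp add: subst_pbc_rename lin_of_terms_rename pbc_def)

lemma clique_obj_UNIV: "clique_obj (UNIV :: 'v::finite set) = ((\<lambda>_. -1), int (card (UNIV :: 'v set)))"
proof -
  have "(\<Sum>w\<in>(UNIV :: 'v set). lit_coef (Neg w) y) = (\<Sum>w\<in>UNIV. if w = y then -1 else 0)" for y
    by (rule sum.cong) auto
  then show ?thesis by (simp add: clique_obj_def fun_eq_iff)
qed

lemma derives_lin_le_refl: "derives H (lin_le L L)"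
proof -
  have "neg_pbc (lin_le L L) = contradiction"
    by (simp add: lin_le_def neg_pbc_def contradiction_def)
  then show ?thesis unfolding derives_def by (auto intro: cp_derivable.axiom)
qed

lemma add_pbc_pbc: "add_pbc (pbc ts A) (pbc ts' B) = pbc (ts @ ts') (A + B)"
  by (simp add: add_pbc_def pbc_def lin_of_terms_def sum_list_addf)

lemma cp_derivable_lit_axiom: "cp_derivable H (pbc [(1, l)] 0)"
  by (cases l) (simp_all add: cp_derivable.lit_axiom_pos cp_derivable.lit_axiom_neg)

lemma cp_derivable_clause_of_unit:
  assumes "cp_derivable H (pbc [(1, l)] 1)"
  shows "cp_derivable H (pbc [(1, l), (1, l')] 1)" and "cp_derivable H (pbc [(1, l'), (1, l)] 1)"
  using cp_derivable.add[OF assms cp_derivable_lit_axiom, of l']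
    cp_derivable.add[OF cp_derivable_lit_axiom assms, of l']
  by (simp_all add: add_pbc_pbc)

lemma cp_derivable_units_of_neg_dom_clause:
  assumes "cp_derivable H (neg_pbc (dom_clause x y))"
  shows "cp_derivable H (pbc [(1, Neg x)] 1)" and "cp_derivable H (pbc [(1, Pos y)] 1)"
proof -
  have "add_pbc (neg_pbc (dom_clause x y)) (pbc [(1, Neg y)] 0) = pbc [(1, Neg x)] 1"
    and "add_pbc (neg_pbc (dom_clause x y)) (pbc [(1, Pos x)] 0) = pbc [(1, Pos y)] 1"
    by (simp_all add: neg_pbc_def dom_clause_def add_pbc_def pbc_def lin_of_terms_def fun_eq_iff)
  then show "cp_derivable H (pbc [(1, Neg x)] 1)" and "cp_derivable H (pbc [(1, Pos y)] 1)"
    using cp_derivable.add[OF assms cp_derivable_lit_axiom] by metis+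
qed

lemma dominates_trans:
  assumes "sym E" "irrefl E" "dominates E x u" "dominates E u v" "x \<noteq> v"
  shows "dominates E x v"
  unfolding dominates_def
proof (intro conjI subsetI)
  show "x \<noteq> v" by fact
  have xu: "nbhd E u - {x} \<subseteq> nbhd E x - {u}" "x \<noteq> u"
    and uv: "nbhd E v - {u} \<subseteq> nbhd E u - {v}"
    using assms(3,4) unfolding dominates_def by auto
  have adj_sym: "a \<in> nbhd E b \<longleftrightarrow> b \<in> nbhd E a" for a b
    using assms(1) by (auto simp: nbhd_def dest: symD)
  fix w assume w: "w \<in> nbhd E v - {x}"
  have "w \<noteq> v" using w assms(2) by (auto simp: nbhd_def irrefl_def)
  moreover have "w \<in> nbhd E x"
  proof (cases "w = u")
    case True
    then have "v \<in> nbhd E x" using w xu adj_sym \<open>x \<noteq> v\<close> by blast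
    then have "x \<in> nbhd E u" using uv adj_sym xu(2) by blast
    then show ?thesis using True adj_sym by blast
  qed (use w xu uv in blast)
  ultimately show "w \<in> nbhd E x - {v}" by blast
qed

lemma transpose_non_edge:
  assumes "sym E" "dominates E u v" "a \<noteq> b" "(a, b) \<notin> E"
  shows "transpose u v a = u \<or> transpose u v b = u \<or> (transpose u v a, transpose u v b) \<notin> E"
proof -
  have v_non_adj: "(v, w) \<notin> E" if "(u, w) \<notin> E" "w \<noteq> u" for w
    using assms(2) that unfolding dominates_def nbhd_def by blast
  consider "a = v \<or> b = v" | "a = u" "b \<noteq> v" | "b = u" "a \<noteq> v" | "a \<noteq> u" "a \<noteq> v" "b \<noteq> u" "b \<noteq> v"
    by blast
  then show ?thesis
  proof cases
    case 2
    then show ?thesis using v_non_adj[of b] assms(3,4) by simp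
  next
    case 3
    then show ?thesis using v_non_adj[of a] assms(1,3,4) by (auto dest: symD)
  qed (use assms(4) in auto)
qed

lemma transpose_dom_clause_mem:
  assumes "sym E" "irrefl E" "trans ord" "irrefl ord" "dominates E u v" "(u, v) \<in> ord"
    and closed: "\<And>x y. x \<noteq> y \<Longrightarrow> dominates E x y \<Longrightarrow> (x, y) \<in> ord \<Longrightarrow> (x, u) \<in> ord
                   \<Longrightarrow> dom_clause x y \<in> \<D>"
    and "dom_clause x y \<in> \<D>" "dominates E x y" "(x, y) \<in> ord" "x = u \<or> (x, u) \<in> ord"
  shows "transpose u v x = v \<or> transpose u v y = u
           \<or> dom_clause (transpose u v x) (transpose u v y) \<in> \<D>"
proof (cases "x = u \<or> y = v")
  case False
  then have xu: "(x, u) \<in> ord" and "x \<noteq> u" "y \<noteq> v" using assms(11) by auto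
  have "x \<noteq> v" using xu assms(3,4,6) by (auto simp: irrefl_def dest: transD)
  show ?thesis
  proof (cases "y = u")
    case True
    have "dominates E x v"
      using dominates_trans[OF assms(1,2)] assms(5,9) True \<open>x \<noteq> v\<close> by blast
    moreover have "(x, v) \<in> ord" using xu assms(3,6) by (auto dest: transD)
    ultimately have "dom_clause x v \<in> \<D>" using closed \<open>x \<noteq> v\<close> xu by blast
    then show ?thesis using True \<open>x \<noteq> u\<close> \<open>x \<noteq> v\<close> by simp
  qed (use assms(8) \<open>x \<noteq> u\<close> \<open>x \<noteq> v\<close> \<open>y \<noteq> v\<close> in simp)
qed auto

lemma cp_derivable_swapped_clique_clause:
  assumes "cp_derivable H (pbc [(1, Neg u)] 1)"
    and "transpose u v a = u \<or> transpose u v b = u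
           \<or> pbc [(1, Neg (transpose u v a)), (1, Neg (transpose u v b))] 1 \<in> H"
  shows "cp_derivable H (subst_pbc (swap_subst u v) (pbc [(1, Neg a), (1, Neg b)] 1))"
  using assms cp_derivable_clause_of_unit[OF assms(1)]
  by (auto simp: swap_subst_eq_transpose subst_pbc_rename_pbc intro: cp_derivable.axiom)

lemma cp_derivable_swapped_dom_clause:
  assumes "cp_derivable H (pbc [(1, Neg u)] 1)" "cp_derivable H (pbc [(1, Pos v)] 1)"
    and "transpose u v x = v \<or> transpose u v y = u
           \<or> dom_clause (transpose u v x) (transpose u v y) \<in> H"
  shows "cp_derivable H (subst_pbc (swap_subst u v) (dom_clause x y))"
  using assms cp_derivable_clause_of_unit[OF assms(1)] cp_derivable_clause_of_unit[OF assms(2)]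
  by (auto simp: swap_subst_eq_transpose subst_pbc_rename_pbc dom_clause_def intro: cp_derivable.axiom)

lemma cp_derivable_swapped_clique_formula:
  assumes "sym E" "dominates E u v" "clique_formula E \<subseteq> H"
    and "cp_derivable H (pbc [(1, Neg u)] 1)" and "C \<in> clique_formula E"
  shows "cp_derivable H (subst_pbc (swap_subst u v) C)"
proof -
  obtain a b where C: "C = pbc [(1, Neg a), (1, Neg b)] 1" and "a \<noteq> b" "(a, b) \<notin> E"
    using assms(5) unfolding clique_formula_def by blast
  then have "transpose u v a \<noteq> transpose u v b" by (auto dest: transpose_eq_imp_eq)
  then have "pbc [(1, Neg (transpose u v a)), (1, Neg (transpose u v b))] 1 \<in> H"
    if "(transpose u v a, transpose u v b) \<notin> E"
    using that assms(3) unfolding clique_formula_def by blast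
  with transpose_non_edge[OF assms(1,2) \<open>a \<noteq> b\<close> \<open>(a, b) \<notin> E\<close>] show ?thesis
    unfolding C by (blast intro: cp_derivable_swapped_clique_clause[OF assms(4)])
qed

lemma cp_derivable_swapped_dominance_clause:
  assumes "sym E" "irrefl E" "trans ord" "irrefl ord" "dominates E u v" "(u, v) \<in> ord"
    and "\<D> \<subseteq> {dom_clause x y | x y. x \<noteq> y \<and> dominates E x y \<and> (x, y) \<in> ord
                                    \<and> (x = u \<or> (x, u) \<in> ord)}"
    and "\<And>x y. x \<noteq> y \<Longrightarrow> dominates E x y \<Longrightarrow> (x, y) \<in> ord \<Longrightarrow> (x, u) \<in> ord
                 \<Longrightarrow> dom_clause x y \<in> \<D>"
    and "\<D> \<subseteq> H" and units: "cp_derivable H (pbc [(1, Neg u)] 1)" "cp_derivable H (pbc [(1, Pos v)] 1)"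
    and "C \<in> insert (dom_clause u v) \<D>"
  shows "cp_derivable H (subst_pbc (swap_subst u v) C)"
proof (cases "C = dom_clause u v")
  case False
  with assms(7,12) obtain x y where C: "C = dom_clause x y" "dom_clause x y \<in> \<D>"
    and "dominates E x y" "(x, y) \<in> ord" "x = u \<or> (x, u) \<in> ord"
    by blast
  then have "transpose u v x = v \<or> transpose u v y = u
             \<or> dom_clause (transpose u v x) (transpose u v y) \<in> H"
    using transpose_dom_clause_mem[OF assms(1-6,8)] assms(9) by blast
  then show ?thesis unfolding C(1) by (rule cp_derivable_swapped_dom_clause[OF units])
qed (auto intro: cp_derivable_swapped_dom_clause[OF units])

theorem mainTheorem12:
  fixes E :: "('v::finite \<times> 'v) set" and ord :: "('v \<times> 'v) set"
    and u v :: 'v and \<D> :: "'v pbc set" and k :: "int option"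
  assumes "sym E" and "irrefl E"
    and "strict_linear_order ord"
    and "u \<noteq> v" and "dominates E u v" and "(u, v) \<in> ord"
    and "\<D> \<subseteq> {dom_clause x y | x y. x \<noteq> y \<and> dominates E x y \<and> (x, y) \<in> ord
                                    \<and> (x = u \<or> (x, u) \<in> ord)}"
    and "\<And>x y. x \<noteq> y \<Longrightarrow> dominates E x y \<Longrightarrow> (x, y) \<in> ord \<Longrightarrow> (x, u) \<in> ord
                 \<Longrightarrow> dom_clause x y \<in> \<D>"
  shows "derives_set
           (clique_formula E \<union> \<D> \<union> {obj_le (clique_obj UNIV) k} \<union> {neg_pbc (dom_clause u v)})
           (subst_pbc (swap_subst u v) ` (clique_formula E \<union> \<D> \<union> {dom_clause u v})
            \<union> {lin_le (subst_lin (swap_subst u v) (clique_obj UNIV)) (clique_obj UNIV)})"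
proof -
  define H where
    "H = clique_formula E \<union> \<D> \<union> {obj_le (clique_obj UNIV) k} \<union> {neg_pbc (dom_clause u v)}"
  have ord_facts: "trans ord" "irrefl ord"
    using assms(3) by (auto simp: strict_linear_order_on_def)
  have "neg_pbc (dom_clause u v) \<in> H" by (simp add: H_def)
  note units = cp_derivable_units_of_neg_dom_clause[OF cp_derivable.axiom[OF this]]
  have "clique_formula E \<union> \<D> \<subseteq> H" by (auto simp: H_def)
  note swapped = cp_derivable_swapped_clique_formula[OF assms(1,5) _ units(1)]
    cp_derivable_swapped_dominance_clause[OF assms(1,2) ord_facts assms(5-8) _ units]
  have "subst_lin (swap_subst u v) (clique_obj UNIV) = clique_obj UNIV"
    unfolding swap_subst_eq_transpose subst_lin_rename[OF bij_transpose]
    by (simp add: clique_obj_UNIV comp_def)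
  then have "derives H (lin_le (subst_lin (swap_subst u v) (clique_obj UNIV)) (clique_obj UNIV))"
    by (simp add: derives_lin_le_refl)
  with swapped \<open>clique_formula E \<union> \<D> \<subseteq> H\<close> show ?thesis
    unfolding derives_set_def H_def[symmetric] by (auto simp: derives_def)
qed

end
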